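(* Let $b$ be a prime, $(\gamma_j)_{j\ge1}$ a non-increasing sequence with $0<\gamma_j\le1$, and $0\le w_1\le w_2\le\cdots$ integers such that $\sum_{j=1}^\infty\gamma_jb^{w_j}<\infty$. Then for every $\delta\in(0,1)$ there is a constant $c_{\boldsymbol\gamma,\delta}>0$, independent of $s$ and $N$, such that for every $s\ge1$, every $m\ge1$ and $N=b^m$, the vector $\mathbf{z}=(b^{w_1}z_1,\dots,b^{w_s}z_s)$ constructed by the reduced CBC algorithm ($z_1=1$, and for $d=1,\dots,s-1$, $z_{d+1}\in\mathcal{Z}_{N,w_{d+1}}$ minimizes $z\mapsto R^{d+1}_{N,\boldsymbol\gamma}(b^{w_1}z_1,\dots,b^{w_d}z_d,b^{w_{d+1}}z)$) satisfies $$R^s_{N,\boldsymbol\gamma}(\mathbf{z})\le c_{\boldsymbol\gamma,\delta}N^{\delta-1}.$$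
   Context: $\beta_j=1+\gamma_j$. $\mathcal{Z}_{N,w}=\{z\in\{1,\dots,b^{m-w}-1\}:\gcd(z,b^m)=1\}$ if $w<m$, and $\{1\}$ if $w\ge m$. For $\mathbf{y}\in\mathbb{Z}^d$, $R^d_{N,\boldsymbol\gamma}(\mathbf{y})=\frac1N\sum_{k=0}^{N-1}\prod_{j=1}^d\big(\beta_j+\gamma_j\sum_{-N/2<h\le N/2,h\ne0}\frac{e^{2\pi i hky_j/N}}{|h|}\big)-\prod_{j=1}^d\beta_j$. *)

theory Defs
  imports "HOL-Analysis.Analysis"
begin

text \<open>beta_j = 1 + gamma_j; sequences are indexed from 1.\<close>
definition beta :: "(nat \<Rightarrow> real) \<Rightarrow> nat \<Rightarrow> real" where
  "beta \<gamma> j = 1 + \<gamma> j"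

definition Zset :: "nat \<Rightarrow> nat \<Rightarrow> nat \<Rightarrow> nat set" where
  "Zset b m w = (if w < m then {z. 1 \<le> z \<and> z \<le> b ^ (m - w) - 1 \<and> gcd z (b ^ m) = 1} else {1})"

definition Rc :: "nat \<Rightarrow> (nat \<Rightarrow> real) \<Rightarrow> nat \<Rightarrow> (nat \<Rightarrow> int) \<Rightarrow> complex" where
  "Rc N \<gamma> d y =
     (1 / of_nat N) * (\<Sum>k<N. \<Prod>j\<in>{1..d}.
        (of_real (beta \<gamma> j) + of_real (\<gamma> j) *
          (\<Sum>h\<in>{h::int. - (real N / 2) < real_of_int h \<and> real_of_int h \<le> real N / 2 \<and> h \<noteq> 0}.
              exp (2 * of_real pi * \<i> * of_int h * of_nat k * of_int (y j) / of_nat N)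
              / of_real \<bar>real_of_int h\<bar>)))
     - (\<Prod>j\<in>{1..d}. of_real (beta \<gamma> j))"

text \<open>R is real-valued (the imaginary parts cancel); we use its real part.\<close>
definition R :: "nat \<Rightarrow> (nat \<Rightarrow> real) \<Rightarrow> nat \<Rightarrow> (nat \<Rightarrow> int) \<Rightarrow> real" where
  "R N \<gamma> d y = Re (Rc N \<gamma> d y)"

definition genvec :: "nat \<Rightarrow> (nat \<Rightarrow> nat) \<Rightarrow> (nat \<Rightarrow> nat) \<Rightarrow> nat \<Rightarrow> int" where
  "genvec b w z j = int (b ^ w j * z j)"

text \<open>z_1,...,z_s is a possible output of the reduced CBC algorithm (any minimizer allowed).\<close>
definition reduced_CBC :: "nat \<Rightarrow> nat \<Rightarrow> (nat \<Rightarrow> real) \<Rightarrow> (nat \<Rightarrow> nat) \<Rightarrow> nat \<Rightarrow> (nat \<Rightarrow> nat) \<Rightarrow> bool" where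
  "reduced_CBC b m \<gamma> w s z \<longleftrightarrow>
     z 1 = 1 \<and>
     (\<forall>d. 1 \<le> d \<and> d < s \<longrightarrow>
        z (d + 1) \<in> Zset b m (w (d + 1)) \<and>
        (\<forall>z' \<in> Zset b m (w (d + 1)).
           R (b ^ m) \<gamma> (d + 1) (genvec b w z) \<le> R (b ^ m) \<gamma> (d + 1) (genvec b w (z(d + 1 := z')))))"

end

theory Submission
  imports Defs
begin

(*
  Write R^d = (1/N) \<Sum>_k P_d(k) - \<Prod>_j \<beta>_j with P_d(k) = \<Prod>_{j\<le>d} (\<beta>_j + \<gamma>_j K(k y_j)), where
  K(x) = \<Sum>_h e(h x / N) / |h| is the truncated kernel. Adding a coordinate gives
  R^{d+1} = \<beta>_{d+1} R^d + \<gamma>_{d+1}/N \<Sum>_k P_d(k) K(k y_{d+1}).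
  The CBC choice is no worse than the mean over Z_{N,w}, and averaging K(k b^w z) over the z prime
  to b produces Ramanujan sums, which vanish unless b^(m-w-1) divides hk. Counting such pairs (h,k)
  bounds the mean of the new term by \<gamma>_{d+1} b^{w_{d+1}} \<Prod>_{j\<le>d} (1 + \<gamma>_j (3 + 2 ln N)) m 2(1 + ln N) b / N,
  so by induction R^s \<le> \<Prod>_j (1 + \<gamma>_j (3 + 2 ln N)) m 2(1 + ln N) b / N \<Sum>_j \<gamma>_j b^{w_j}.
  Summability of \<gamma>_j b^{w_j} makes the product O(N^\<epsilon>) for every \<epsilon> > 0, and m ln N = O(N^\<epsilon>).
*)

section \<open>Harmonic sums over the frequencies\<close>

definition frequencies :: "nat \<Rightarrow> int set" where
  "frequencies N = {h. - (real N / 2) < real_of_int h \<and> real_of_int h \<le> real N / 2 \<and> h \<noteq> 0}"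

lemma frequencies_subset: "frequencies N \<subseteq> {-int N..int N} - {0}"
  unfolding frequencies_def by auto

lemma finite_frequencies [simp]: "finite (frequencies N)"
  using frequencies_subset by (rule finite_subset) auto

lemma harm_le_one_plus_ln:
  assumes "n \<ge> 1"
  shows "harm n \<le> 1 + ln (real n)"
proof -
  have "harm (Suc (n - 1)) - ln (real (Suc (n - 1))) \<le> harm (Suc 0) - ln (real (Suc 0))"
    using decseq_harm_diff_ln[unfolded decseq_def] by blast
  then show ?thesis
    using assms by (simp add: harm_def)
qed

lemma sum_inverse_abs_symmetric_interval:
  "(\<Sum>u\<in>{-int n..int n} - {0}. 1 / \<bar>real_of_int u\<bar>) = 2 * harm n"
proof -
  have split: "{-int n..int n} - {0} = int ` {1..n} \<union> (\<lambda>k. - int k) ` {1..n}"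
  proof (rule set_eqI, rule iffI)
    fix u assume "u \<in> {-int n..int n} - {0}"
    then show "u \<in> int ` {1..n} \<union> (\<lambda>k. - int k) ` {1..n}"
      by (cases "u > 0") (auto simp: image_iff intro!: bexI[of _ "nat \<bar>u\<bar>"])
  qed auto
  have "(\<Sum>u\<in>int ` {1..n}. 1 / \<bar>real_of_int u\<bar>) = harm n"
       "(\<Sum>u\<in>(\<lambda>k. - int k) ` {1..n}. 1 / \<bar>real_of_int u\<bar>) = harm n"
    by (subst sum.reindex; force simp: inj_on_def harm_def divide_inverse)+
  then show ?thesis
    unfolding split by (subst sum.union_disjoint) auto
qed

lemma sum_frequencies_dvd_le:
  fixes D :: int
  assumes "D > 0" "N \<ge> 1"
  shows "(\<Sum>h\<in>{h\<in>frequencies N. D dvd h}. 1 / \<bar>real_of_int h\<bar>) \<le> 2 * (1 + ln (real N)) / D"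
proof -
  let ?U = "{-int N..int N} - {0}"
  have "{h\<in>frequencies N. D dvd h} \<subseteq> (*) D ` ?U"
  proof
    fix h assume "h \<in> {h\<in>frequencies N. D dvd h}"
    then have "h \<in> ?U" and "D dvd h"
      using frequencies_subset[of N] by auto
    moreover obtain u where u: "h = D * u"
      using \<open>D dvd h\<close> by blast
    moreover have "\<bar>u\<bar> \<le> \<bar>h\<bar>"
      using u \<open>D > 0\<close> by (auto simp: abs_mult intro: mult_le_cancel_right1[THEN iffD2])
    ultimately have "u \<in> ?U" by auto
    with u show "h \<in> (*) D ` ?U" by blast
  qed
  then have "(\<Sum>h\<in>{h\<in>frequencies N. D dvd h}. 1 / \<bar>real_of_int h\<bar>)
      \<le> (\<Sum>h\<in>(*) D ` ?U. 1 / \<bar>real_of_int h\<bar>)"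
    by (intro sum_mono2) auto
  also have "\<dots> = (\<Sum>u\<in>?U. 1 / \<bar>real_of_int u\<bar>) / D"
    using assms(1) by (subst sum.reindex) (auto simp: inj_on_def abs_mult sum_divide_distrib mult.commute)
  also have "\<dots> \<le> 2 * (1 + ln (real N)) / D"
    using harm_le_one_plus_ln[OF assms(2)] assms(1)
    by (simp add: sum_inverse_abs_symmetric_interval divide_right_mono)
  finally show ?thesis .
qed

lemma sum_frequencies_le:
  "N \<ge> 1 \<Longrightarrow> (\<Sum>h\<in>frequencies N. 1 / \<bar>real_of_int h\<bar>) \<le> 2 * (1 + ln (real N))"
  using sum_frequencies_dvd_le[of 1 N] by simp

lemma prime_power_dvd_mult_split:
  fixes p :: "'a :: factorial_semiring"
  assumes "prime_elem p" "p ^ n dvd a * b"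
  shows "\<exists>t\<le>n. p ^ t dvd a \<and> p ^ (n - t) dvd b"
  using assms(2)
proof (induction n arbitrary: a)
  case 0
  then show ?case by auto
next
  case (Suc n)
  show ?case
  proof (cases "p dvd a")
    case True
    then obtain a' where a': "a = p * a'" by blast
    with Suc.prems assms(1) have "p ^ n dvd a' * b"
      by (simp add: mult.assoc prime_elem_def)
    then obtain t where "t \<le> n" "p ^ t dvd a'" "p ^ (n - t) dvd b"
      using Suc.IH by blast
    with a' show ?thesis by (intro exI[of _ "Suc t"]) (auto simp: mult_dvd_mono)
  next
    case False
    then have "p ^ Suc n dvd b"
      using prime_power_dvd_multD[OF assms(1) Suc.prems] by simp
    then show ?thesis by (intro exI[of _ 0]) auto
  qed
qed

lemma card_multiples_below:
  fixes D N :: nat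
  assumes "D > 0" "D dvd N"
  shows "card {k. k < N \<and> D dvd k} = N div D"
proof -
  have less_iff: "D * u < N \<longleftrightarrow> u < N div D" for u
    using assms by (metis dvd_mult_div_cancel mult_less_cancel1)
  have "{k. k < N \<and> D dvd k} = (*) D ` {..<N div D}"
    by (auto simp: less_iff dvd_def)
  then show ?thesis
    using assms by (simp add: card_image inj_on_def)
qed

lemma if_power_dvd_mult_le_sum:
  fixes x :: real
  assumes "prime b" "0 \<le> x"
  shows "(if int (b^r) dvd h * int k then x else 0)
    \<le> (\<Sum>t\<le>r. (if b ^ (r - t) dvd k then 1 else 0) * (if int b ^ t dvd h then x else 0))"
proof (cases "int (b^r) dvd h * int k")
  case True
  then obtain t where t: "t \<le> r" "int b ^ t dvd h" "int b ^ (r - t) dvd int k"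
    using prime_power_dvd_mult_split[of "int b" r h "int k"] assms(1) by auto
  then have "x = (if b ^ (r - t) dvd k then 1 else 0) * (if int b ^ t dvd h then x else 0)"
    by (simp flip: of_nat_power)
  also have "\<dots> \<le> (\<Sum>t\<le>r. (if b ^ (r - t) dvd k then 1 else 0) * (if int b ^ t dvd h then x else 0))"
    using t(1) assms(2) by (intro member_le_sum) auto
  finally show ?thesis
    using True by simp
qed (use assms(2) in \<open>auto intro!: sum_nonneg\<close>)

lemma sum_sum_frequencies_dvd_mult_le:
  fixes b m r :: nat
  assumes "prime b" "r < m"
  shows "(\<Sum>k<b^m. \<Sum>h\<in>{h\<in>frequencies (b^m). int (b^r) dvd h * int k}. 1 / \<bar>real_of_int h\<bar>)
     \<le> real (Suc r) * (2 * (1 + ln (real (b^m)))) * real (b^m) / real (b^r)"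
proof -
  define N where "N = b^m"
  define f where "f h = 1 / \<bar>real_of_int h\<bar>" for h :: int
  define u where "u t k = (if b ^ (r - t) dvd k then 1 else 0 :: real)" for t k
  define v where "v t h = (if int b ^ t dvd h then f h else 0)" for t h
  have b0: "b > 0"
    using assms(1) prime_gt_0_nat by blast
  then have N1: "N \<ge> 1"
    unfolding N_def by simp
  have split: "(if int (b^r) dvd h * int k then f h else 0) \<le> (\<Sum>t\<le>r. u t k * v t h)" for h k
    unfolding u_def v_def using if_power_dvd_mult_le_sum[OF assms(1), of "f h"] by (simp add: f_def)
  have "(\<Sum>k<N. \<Sum>h\<in>{h\<in>frequencies N. int (b^r) dvd h * int k}. f h)
      = (\<Sum>k<N. \<Sum>h\<in>frequencies N. if int (b^r) dvd h * int k then f h else 0)"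
    by (simp add: sum.inter_filter)
  also have "\<dots> \<le> (\<Sum>k<N. \<Sum>h\<in>frequencies N. \<Sum>t\<le>r. u t k * v t h)"
    by (intro sum_mono split)
  also have "\<dots> = (\<Sum>k<N. \<Sum>t\<le>r. \<Sum>h\<in>frequencies N. u t k * v t h)"
    by (intro sum.cong refl) (rule sum.swap)
  also have "\<dots> = (\<Sum>t\<le>r. (\<Sum>k<N. u t k) * (\<Sum>h\<in>frequencies N. v t h))"
    by (subst sum.swap) (simp add: sum_product)
  also have "\<dots> \<le> (\<Sum>t\<le>r. real N / real (b ^ (r - t)) * (2 * (1 + ln (real N)) / real (b ^ t)))"
  proof (intro sum_mono mult_mono)
    fix t assume "t \<in> {..r}"
    then have "b ^ (r - t) dvd N"
      using assms(2) unfolding N_def by (simp add: le_imp_power_dvd)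
    moreover have "(\<Sum>k<N. u t k) = real (card {k. k < N \<and> b ^ (r - t) dvd k})"
      unfolding u_def by (simp add: sum.inter_filter[symmetric])
    ultimately show "(\<Sum>k<N. u t k) \<le> real N / real (b ^ (r - t))"
      using card_multiples_below[of "b ^ (r - t)" N] b0 by (simp add: real_of_nat_div)
    show "(\<Sum>h\<in>frequencies N. v t h) \<le> 2 * (1 + ln (real N)) / real (b ^ t)"
      using sum_frequencies_dvd_le[of "int b ^ t" N] b0 N1
      unfolding v_def f_def by (simp add: sum.inter_filter)
  qed (auto simp: u_def v_def f_def intro!: sum_nonneg)
  also have "\<dots> = real (Suc r) * (2 * (1 + ln (real N))) * real N / real (b^r)"
  proof -
    have "real (b ^ (r - t)) * real (b ^ t) = real (b ^ r)" if "t \<le> r" for t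
      using that by (simp flip: of_nat_mult power_add)
    then show ?thesis by simp
  qed
  finally show ?thesis unfolding N_def f_def .
qed

section \<open>Exponential sums\<close>

definition efrac :: "nat \<Rightarrow> int \<Rightarrow> complex" where
  "efrac n a = exp (2 * of_real pi * \<i> * of_int a / of_nat n)"

lemma norm_efrac [simp]: "norm (efrac n a) = 1"
  unfolding efrac_def by simp

lemma efrac_mult_cancel: "c > 0 \<Longrightarrow> efrac (c * n) (int c * a) = efrac n a"
  unfolding efrac_def by (simp add: field_simps)

lemma efrac_mult_of_nat: "efrac n (a * int z) = efrac n a ^ z"
  unfolding efrac_def by (simp flip: exp_of_nat_mult add: field_simps)

lemma efrac_eq_1_iff:
  assumes "n > 0"
  shows "efrac n a = 1 \<longleftrightarrow> int n dvd a"
proof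
  assume "efrac n a = 1"
  then obtain t :: int where "Im (2 * of_real pi * \<i> * of_int a / of_nat n) = of_int (2 * t) * pi"
    unfolding efrac_def exp_eq_1 by blast
  then have "real_of_int a = real n * t"
    using assms pi_gt_zero by (simp add: field_simps)
  then show "int n dvd a"
    by (metis dvd_triv_left of_int_eq_iff of_int_mult of_int_of_nat_eq)
next
  assume "int n dvd a"
  then obtain t where "a = int n * t" ..
  then show "efrac n a = 1"
    using assms exp_integer_2pi[of "of_int t"] by (simp add: efrac_def field_simps)
qed

lemma sum_efrac_eq_0:
  assumes "n > 0" "\<not> int n dvd a"
  shows "(\<Sum>z<n. efrac n (a * int z)) = 0"
proof -
  have "efrac n a ^ n = 1"
    using efrac_mult_of_nat[of n a n] efrac_eq_1_iff[OF assms(1), of "a * int n"] by simp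
  moreover have "efrac n a \<noteq> 1"
    using efrac_eq_1_iff assms by blast
  ultimately show ?thesis
    by (simp add: efrac_mult_of_nat sum_gp_strict)
qed

text \<open>A Ramanujan sum modulo b^(r+1): the full sum and the sum over multiples of b both vanish.\<close>

lemma sum_efrac_units_eq_0:
  assumes "b > 0" "\<not> int (b ^ r) dvd a"
  shows "(\<Sum>z\<in>{z. z < b ^ Suc r \<and> \<not> b dvd z}. efrac (b ^ Suc r) (a * int z)) = 0"
proof -
  let ?e = "\<lambda>z. efrac (b ^ Suc r) (a * int z)"
  have "\<not> int (b ^ Suc r) dvd a"
    using assms(2) dvd_mult_right[of "int b" "int (b ^ r)" a] unfolding power_Suc of_nat_mult by blast
  then have all: "(\<Sum>z<b ^ Suc r. ?e z) = 0"
    using assms(1) by (intro sum_efrac_eq_0) auto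
  have "{z. z < b ^ Suc r \<and> b dvd z} = (*) b ` {..<b ^ r}"
    using assms(1) by (auto simp: dvd_def)
  moreover have "efrac (b ^ Suc r) (a * int (b * t)) = efrac (b ^ r) (a * int t)" for t
    using efrac_mult_cancel[of b "b ^ r" "a * int t"] assms(1) by (simp add: mult_ac)
  ultimately have "(\<Sum>z\<in>{z. z < b ^ Suc r \<and> b dvd z}. ?e z) = (\<Sum>t<b ^ r. efrac (b ^ r) (a * int t))"
    using assms(1) by (simp add: sum.reindex inj_on_def del: power_Suc)
  also have "\<dots> = 0"
    using assms by (intro sum_efrac_eq_0) auto
  finally have multiples: "(\<Sum>z\<in>{z. z < b ^ Suc r \<and> b dvd z}. ?e z) = 0" .
  have "(\<Sum>z<b ^ Suc r. ?e z)
      = (\<Sum>z\<in>{z. z < b ^ Suc r \<and> \<not> b dvd z}. ?e z) + (\<Sum>z\<in>{z. z < b ^ Suc r \<and> b dvd z}. ?e z)"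
    by (subst sum.union_disjoint[symmetric]) (auto intro!: sum.cong)
  with all multiples show ?thesis by simp
qed

section \<open>The kernel form of R\<close>

definition trunc_kernel :: "nat \<Rightarrow> nat \<Rightarrow> int \<Rightarrow> complex" where
  "trunc_kernel N k y = (\<Sum>h\<in>frequencies N. efrac N (h * int k * y) / of_real \<bar>real_of_int h\<bar>)"

definition kernel_prod :: "nat \<Rightarrow> (nat \<Rightarrow> real) \<Rightarrow> nat \<Rightarrow> nat \<Rightarrow> (nat \<Rightarrow> int) \<Rightarrow> complex" where
  "kernel_prod N \<gamma> d k y = (\<Prod>j\<in>{1..d}. of_real (beta \<gamma> j) + of_real (\<gamma> j) * trunc_kernel N k (y j))"

lemma Rc_eq_kernel_prod:
  "Rc N \<gamma> d y = 1 / of_nat N * (\<Sum>k<N. kernel_prod N \<gamma> d k y) - (\<Prod>j\<in>{1..d}. of_real (beta \<gamma> j))"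
  unfolding Rc_def kernel_prod_def trunc_kernel_def efrac_def frequencies_def
  by (simp add: mult.assoc)

lemma Rc_0: "N > 0 \<Longrightarrow> Rc N \<gamma> 0 y = 0"
  by (simp add: Rc_eq_kernel_prod kernel_prod_def)

lemma Rc_Suc:
  assumes "N > 0"
  shows "Rc N \<gamma> (Suc d) y = of_real (beta \<gamma> (Suc d)) * Rc N \<gamma> d y
     + of_real (\<gamma> (Suc d)) / of_nat N * (\<Sum>k<N. kernel_prod N \<gamma> d k y * trunc_kernel N k (y (Suc d)))"
  using assms
  by (simp add: Rc_eq_kernel_prod kernel_prod_def prod.nat_ivl_Suc' sum.distrib sum_distrib_left
      sum_distrib_right sum_divide_distrib algebra_simps)

lemma kernel_prod_cong:
  "(\<And>j. 1 \<le> j \<Longrightarrow> j \<le> d \<Longrightarrow> y j = y' j) \<Longrightarrow> kernel_prod N \<gamma> d k y = kernel_prod N \<gamma> d k y'"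
  unfolding kernel_prod_def by (intro prod.cong) auto

lemma Rc_cong:
  "(\<And>j. 1 \<le> j \<Longrightarrow> j \<le> d \<Longrightarrow> y j = y' j) \<Longrightarrow> Rc N \<gamma> d y = Rc N \<gamma> d y'"
  unfolding Rc_eq_kernel_prod using kernel_prod_cong[of d y y'] by simp

lemma norm_trunc_kernel_le:
  assumes "N \<ge> 1"
  shows "norm (trunc_kernel N k y) \<le> 2 * (1 + ln (real N))"
proof -
  have "norm (trunc_kernel N k y) \<le> (\<Sum>h\<in>frequencies N. norm (efrac N (h * int k * y) / of_real \<bar>real_of_int h\<bar>))"
    unfolding trunc_kernel_def by (rule norm_sum)
  also have "\<dots> = (\<Sum>h\<in>frequencies N. 1 / \<bar>real_of_int h\<bar>)"
    by (simp add: norm_divide)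
  also have "\<dots> \<le> 2 * (1 + ln (real N))"
    using sum_frequencies_le assms by simp
  finally show ?thesis .
qed

lemma norm_kernel_prod_le:
  assumes "N \<ge> 1" "\<And>j. j \<ge> 1 \<Longrightarrow> 0 \<le> \<gamma> j"
  shows "norm (kernel_prod N \<gamma> d k y) \<le> (\<Prod>j\<in>{1..d}. 1 + \<gamma> j * (3 + 2 * ln (real N)))"
  unfolding kernel_prod_def prod_norm[symmetric]
proof (rule prod_mono, safe)
  fix j assume "j \<in> {1..d}"
  then have \<gamma>j: "0 \<le> \<gamma> j"
    using assms(2) by simp
  have "norm (of_real (beta \<gamma> j) + of_real (\<gamma> j) * trunc_kernel N k (y j))
      \<le> norm (of_real (beta \<gamma> j) :: complex) + norm (of_real (\<gamma> j) * trunc_kernel N k (y j))"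
    by (rule norm_triangle_ineq)
  also have "\<dots> = (1 + \<gamma> j) + \<gamma> j * norm (trunc_kernel N k (y j))"
    using \<gamma>j by (simp only: norm_mult norm_of_real beta_def)
  also have "\<dots> \<le> (1 + \<gamma> j) + \<gamma> j * (2 * (1 + ln (real N)))"
    using \<gamma>j norm_trunc_kernel_le[OF assms(1)] by (simp add: mult_left_mono)
  finally show "norm (of_real (beta \<gamma> j) + of_real (\<gamma> j) * trunc_kernel N k (y j))
      \<le> 1 + \<gamma> j * (3 + 2 * ln (real N))"
    by (simp add: algebra_simps)
qed simp

lemma power_dvd_mult_power_imp:
  fixes h :: int
  assumes "b > 0" "int (b ^ m) dvd h * int (b ^ v)"
  shows "int (b ^ (m - v)) dvd h"
proof (cases "v < m")
  case True
  then have "int (b ^ (m - v)) * int (b ^ v) dvd h * int (b ^ v)"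
    using assms(2) by (simp flip: of_nat_mult power_add)
  then show ?thesis
    using assms(1) by simp
qed simp

lemma norm_sum_divide_abs_le:
  fixes S :: "int \<Rightarrow> complex"
  assumes "finite H" and vanish: "\<And>h. h \<in> H \<Longrightarrow> \<not> P h \<Longrightarrow> S h = 0"
    and bound: "\<And>h. h \<in> H \<Longrightarrow> norm (S h) \<le> c"
  shows "norm (\<Sum>h\<in>H. S h / of_real \<bar>real_of_int h\<bar>) \<le> c * (\<Sum>h\<in>{h\<in>H. P h}. 1 / \<bar>real_of_int h\<bar>)"
proof -
  have "(\<Sum>h\<in>H. S h / of_real \<bar>real_of_int h\<bar>) = (\<Sum>h\<in>{h\<in>H. P h}. S h / of_real \<bar>real_of_int h\<bar>)"
    using assms(1) vanish by (intro sum.mono_neutral_right) auto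
  also have "norm \<dots> \<le> (\<Sum>h\<in>{h\<in>H. P h}. c * (1 / \<bar>real_of_int h\<bar>))"
    using bound by (intro order_trans[OF norm_sum sum_mono]) (simp add: norm_divide divide_right_mono)
  finally show ?thesis
    by (simp add: sum_distrib_left)
qed

lemma norm_sum_trunc_kernel_power_le:
  assumes "b > 0"
  shows "norm (\<Sum>k<b^m. trunc_kernel (b^m) k (int (b^v))) \<le> 2 * (1 + ln (real (b^m))) * real (b^v)"
proof -
  define N where "N = b^m"
  have N1: "N \<ge> 1"
    using assms unfolding N_def by simp
  have "(\<Sum>k<N. trunc_kernel N k (int (b^v)))
      = (\<Sum>h\<in>frequencies N. (\<Sum>k<N. efrac N (h * int (b^v) * int k)) / of_real \<bar>real_of_int h\<bar>)"
    unfolding trunc_kernel_def by (subst sum.swap) (simp add: sum_divide_distrib mult_ac)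
  also have "norm \<dots> \<le> real N * (\<Sum>h\<in>{h\<in>frequencies N. int N dvd h * int (b^v)}. 1 / \<bar>real_of_int h\<bar>)"
  proof (rule norm_sum_divide_abs_le)
    show "(\<Sum>k<N. efrac N (h * int (b^v) * int k)) = 0" if "\<not> int N dvd h * int (b^v)" for h
      using that N1 by (simp add: sum_efrac_eq_0)
    show "norm (\<Sum>k<N. efrac N (h * int (b^v) * int k)) \<le> real N" for h
      using norm_sum[of "\<lambda>k. efrac N (h * int (b^v) * int k)" "{..<N}"] by simp
  qed simp
  also have "\<dots> \<le> real N * (\<Sum>h\<in>{h\<in>frequencies N. int (b ^ (m - v)) dvd h}. 1 / \<bar>real_of_int h\<bar>)"
    using power_dvd_mult_power_imp[OF assms, of m _ v] unfolding N_def
    by (intro mult_left_mono sum_mono2) auto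
  also have "\<dots> \<le> real N * (2 * (1 + ln (real N)) / real (b ^ (m - v)))"
    using sum_frequencies_dvd_le[of "int (b ^ (m - v))" N] assms N1 by (intro mult_left_mono) simp_all
  also have "\<dots> \<le> 2 * (1 + ln (real N)) * real (b ^ v)"
  proof -
    have "N \<le> b ^ (m - v) * b ^ v"
      using assms unfolding N_def by (simp flip: power_add add: power_increasing)
    then have "real N \<le> real (b ^ (m - v)) * real (b ^ v)"
      by (metis of_nat_le_iff of_nat_mult)
    then have "real N / real (b ^ (m - v)) \<le> real (b ^ v)"
      using assms by (simp add: pos_divide_le_eq mult.commute)
    moreover have "0 \<le> 2 * (1 + ln (real N))"
      using N1 by simp
    ultimately show ?thesis
      by (metis mult_left_mono times_divide_eq_right mult.commute)
  qed
  finally show ?thesis unfolding N_def .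
qed

lemma R_one_le:
  assumes "b > 0" "0 \<le> \<gamma> 1" "z 1 = 1"
  shows "R (b^m) \<gamma> 1 (genvec b w z) \<le> \<gamma> 1 * real b ^ w 1 * (2 * (1 + ln (real (b^m)))) / real (b^m)"
proof -
  define N where "N = b^m"
  have N0: "N > 0"
    using assms(1) unfolding N_def by simp
  have "Rc N \<gamma> 1 (genvec b w z) = of_real (\<gamma> 1) / of_nat N * (\<Sum>k<N. trunc_kernel N k (int (b ^ w 1)))"
    using Rc_Suc[OF N0, of \<gamma> 0 "genvec b w z"] Rc_0[OF N0] assms(3)
    by (simp add: kernel_prod_def genvec_def)
  then have "norm (Rc N \<gamma> 1 (genvec b w z)) = \<gamma> 1 / real N * norm (\<Sum>k<N. trunc_kernel N k (int (b ^ w 1)))"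
    using assms(2) by (simp add: norm_mult norm_divide)
  then have "R N \<gamma> 1 (genvec b w z) \<le> \<gamma> 1 / real N * norm (\<Sum>k<N. trunc_kernel N k (int (b ^ w 1)))"
    using complex_Re_le_cmod unfolding R_def by metis
  also have "\<dots> \<le> \<gamma> 1 / real N * (2 * (1 + ln (real N)) * real (b ^ w 1))"
    using norm_sum_trunc_kernel_power_le[OF assms(1)] assms(2) unfolding N_def
    by (intro mult_left_mono) auto
  finally show ?thesis
    unfolding N_def by (simp add: field_simps)
qed

section \<open>Averaging over the reduced CBC candidates\<close>

lemma Zset_eq_units:
  assumes "prime b" "w < m"
  shows "Zset b m w = {z. z < b ^ (m - w) \<and> \<not> b dvd z}"
proof -
  have gcd_iff: "gcd z (b ^ m) = 1 \<longleftrightarrow> \<not> b dvd z" for z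
  proof -
    have "gcd z (b ^ m) = 1 \<longleftrightarrow> coprime z (b ^ m)"
      by (rule coprime_iff_gcd_eq_1[symmetric])
    also have "\<dots> \<longleftrightarrow> coprime z b"
      using assms(2) by simp
    also have "\<dots> \<longleftrightarrow> \<not> b dvd z"
      using assms(1) by (metis coprime_absorb_right coprime_commute not_prime_unit prime_imp_coprime_nat)
    finally show ?thesis .
  qed
  have "z \<in> Zset b m w \<longleftrightarrow> z < b ^ (m - w) \<and> \<not> b dvd z" for z
    using assms(2) gcd_iff[of z] prime_gt_0_nat[OF assms(1)]
    by (cases "z = 0") (auto simp: Zset_def Suc_le_eq)
  then show ?thesis
    by blast
qed

lemma finite_Zset [simp]: "finite (Zset b m w)"
  unfolding Zset_def by (auto intro: finite_subset[of _ "{..b ^ m}"])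

lemma one_in_Zset:
  assumes "prime b"
  shows "1 \<in> Zset b m w"
proof -
  have b2: "b \<ge> 2"
    using assms prime_ge_2_nat by blast
  have "b ^ (m - w) \<ge> 2" if "w < m"
  proof -
    have "b ^ 1 \<le> b ^ (m - w)"
      using b2 that by (intro power_increasing) auto
    with b2 show ?thesis by simp
  qed
  then show ?thesis
    unfolding Zset_def by auto
qed

lemma card_Zset_pos: "prime b \<Longrightarrow> card (Zset b m w) > 0"
  using finite_Zset one_in_Zset card_gt_0_iff by blast

lemma norm_sum_trunc_kernel_Zset_le:
  assumes "prime b" "m = w + Suc r"
  shows "norm (\<Sum>z\<in>Zset b m w. trunc_kernel (b^m) k (int (b^w * z)))
     \<le> card (Zset b m w) * (\<Sum>h\<in>{h\<in>frequencies (b^m). int (b^r) dvd h * int k}. 1 / \<bar>real_of_int h\<bar>)"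
proof -
  define Z where "Z = Zset b m w"
  define N where "N = b^m"
  have b0: "b > 0"
    using assms(1) prime_gt_0_nat by blast
  have Z: "Z = {z. z < b ^ Suc r \<and> \<not> b dvd z}"
    unfolding Z_def using Zset_eq_units[OF assms(1)] assms(2) by simp
  have scale: "efrac N (h * int k * int (b^w * z)) = efrac (b ^ Suc r) (h * int k * int z)" for h z
    using efrac_mult_cancel[of "b^w" "b ^ Suc r" "h * int k * int z"] b0 assms(2)
    by (simp add: N_def power_add mult_ac)
  have "(\<Sum>z\<in>Z. trunc_kernel N k (int (b^w * z)))
      = (\<Sum>h\<in>frequencies N. (\<Sum>z\<in>Z. efrac (b ^ Suc r) (h * int k * int z)) / of_real \<bar>real_of_int h\<bar>)"
    unfolding trunc_kernel_def scale by (subst sum.swap) (simp add: sum_divide_distrib)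
  also have "norm \<dots> \<le> real (card Z) * (\<Sum>h\<in>{h\<in>frequencies N. int (b^r) dvd h * int k}. 1 / \<bar>real_of_int h\<bar>)"
  proof (rule norm_sum_divide_abs_le)
    show "(\<Sum>z\<in>Z. efrac (b ^ Suc r) (h * int k * int z)) = 0" if "\<not> int (b^r) dvd h * int k" for h
      using sum_efrac_units_eq_0[OF b0 that] unfolding Z by simp
    show "norm (\<Sum>z\<in>Z. efrac (b ^ Suc r) (h * int k * int z)) \<le> real (card Z)" for h
      using norm_sum[of "\<lambda>z. efrac (b ^ Suc r) (h * int k * int z)" Z] by simp
  qed simp
  finally show ?thesis
    unfolding Z_def N_def .
qed

lemma sum_norm_mean_trunc_kernel_Zset_le:
  assumes "prime b" "m \<ge> 1"
  shows "(\<Sum>k<b^m. norm ((\<Sum>z\<in>Zset b m w. trunc_kernel (b^m) k (int (b^w * z))) / of_nat (card (Zset b m w))))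
     \<le> real m * (2 * (1 + ln (real (b^m)))) * real b * real (b^w)"
proof -
  define N where "N = b^m"
  define K where "K = 2 * (1 + ln (real N))"
  have b2: "b \<ge> 2"
    using prime_ge_2_nat[OF assms(1)] .
  have N1: "N \<ge> 1"
    unfolding N_def using b2 by simp
  have K0: "K \<ge> 0"
    unfolding K_def using N1 by simp
  have mb: "1 \<le> real m * real b"
  proof -
    have "1 * 1 \<le> real m * real b"
      using assms(2) b2 by (intro mult_mono) auto
    then show ?thesis by simp
  qed
  show ?thesis
  proof (cases "w < m")
    case True
    then obtain r where r: "m = w + Suc r"
      by (metis add_Suc_right less_iff_Suc_add)
    have "(\<Sum>k<N. norm ((\<Sum>z\<in>Zset b m w. trunc_kernel N k (int (b^w * z))) / of_nat (card (Zset b m w))))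
        \<le> (\<Sum>k<N. \<Sum>h\<in>{h\<in>frequencies N. int (b^r) dvd h * int k}. 1 / \<bar>real_of_int h\<bar>)"
      using norm_sum_trunc_kernel_Zset_le[OF assms(1) r] card_Zset_pos[OF assms(1)]
      by (intro sum_mono) (simp add: N_def norm_divide pos_divide_le_eq mult.commute)
    also have "\<dots> \<le> real (Suc r) * K * real N / real (b^r)"
      using sum_sum_frequencies_dvd_mult_le[OF assms(1), of r m] r unfolding N_def K_def by simp
    also have "\<dots> = real (Suc r) * K * real b * real (b^w)"
      using b2 unfolding N_def r by (simp add: power_add)
    also have "\<dots> \<le> real m * K * real b * real (b^w)"
      using r K0 by (intro mult_right_mono) auto
    finally show ?thesis
      unfolding N_def K_def .
  next
    case False
    then have "(\<Sum>k<N. norm ((\<Sum>z\<in>Zset b m w. trunc_kernel N k (int (b^w * z))) / of_nat (card (Zset b m w))))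
        = (\<Sum>k<N. norm (trunc_kernel N k (int (b^w))))"
      by (simp add: Zset_def)
    also have "\<dots> \<le> real N * K"
      using sum_mono[of "{..<N}", OF norm_trunc_kernel_le[OF N1]] unfolding K_def by simp
    also have "\<dots> \<le> real (b^w) * K"
      using False b2 K0 unfolding N_def by (intro mult_right_mono) (auto intro: power_increasing)
    also have "\<dots> \<le> real m * K * real b * real (b^w)"
      using mult_right_mono[OF mb, of "K * real (b^w)"] K0 by (simp add: algebra_simps)
    finally show ?thesis
      unfolding N_def K_def .
  qed
qed

section \<open>The CBC recursion\<close>

lemma genvec_fun_upd: "genvec b w (z(j := t)) = (genvec b w z)(j := int (b ^ w j * t))"
  by (simp add: genvec_def fun_eq_iff)

lemma Rc_Suc_fun_upd:
  assumes "N > 0"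
  shows "Rc N \<gamma> (Suc d) (y(Suc d := t)) = of_real (beta \<gamma> (Suc d)) * Rc N \<gamma> d y
     + of_real (\<gamma> (Suc d)) / of_nat N * (\<Sum>k<N. kernel_prod N \<gamma> d k y * trunc_kernel N k t)"
  using Rc_Suc[OF assms, of \<gamma> d "y(Suc d := t)"]
    Rc_cong[of d "y(Suc d := t)" y] kernel_prod_cong[of d "y(Suc d := t)" y]
  by simp

lemma mean_Rc_Suc_fun_upd:
  assumes "N > 0" "card Z > 0"
  shows "(\<Sum>z\<in>Z. Rc N \<gamma> (Suc d) (y(Suc d := f z))) / of_nat (card Z)
     = of_real (beta \<gamma> (Suc d)) * Rc N \<gamma> d y + of_real (\<gamma> (Suc d)) / of_nat N
       * (\<Sum>k<N. kernel_prod N \<gamma> d k y * ((\<Sum>z\<in>Z. trunc_kernel N k (f z)) / of_nat (card Z)))"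
proof -
  define P where "P k = kernel_prod N \<gamma> d k y" for k
  define T where "T k z = trunc_kernel N k (f z)" for k z
  have "(\<Sum>z\<in>Z. \<Sum>k<N. P k * T k z) = (\<Sum>k<N. P k * (\<Sum>z\<in>Z. T k z))"
    unfolding sum_distrib_left by (rule sum.swap)
  then have "(\<Sum>z\<in>Z. Rc N \<gamma> (Suc d) (y(Suc d := f z)))
      = of_nat (card Z) * (of_real (beta \<gamma> (Suc d)) * Rc N \<gamma> d y)
        + of_real (\<gamma> (Suc d)) / of_nat N * (\<Sum>k<N. P k * (\<Sum>z\<in>Z. T k z))"
    unfolding Rc_Suc_fun_upd[OF assms(1)] sum.distrib P_def T_def
    by (simp flip: sum_distrib_left sum_divide_distrib)
  then show ?thesis
    using assms(2) unfolding P_def T_def by (simp add: add_divide_distrib flip: sum_divide_distrib)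
qed

lemma R_Suc_le_of_reduced_CBC:
  assumes b: "prime b" and m: "m \<ge> 1" and \<gamma>: "\<And>j. j \<ge> 1 \<Longrightarrow> 0 \<le> \<gamma> j"
    and cbc: "reduced_CBC b m \<gamma> w s z" and d: "1 \<le> d" "d < s"
  shows "R (b^m) \<gamma> (Suc d) (genvec b w z) \<le> beta \<gamma> (Suc d) * R (b^m) \<gamma> d (genvec b w z)
     + \<gamma> (Suc d) * real b ^ w (Suc d) * (\<Prod>j\<in>{1..d}. 1 + \<gamma> j * (3 + 2 * ln (real (b^m))))
       * (real m * (2 * (1 + ln (real (b^m)))) * real b / real (b^m))"
proof -
  define N where "N = b^m"
  define y where "y = genvec b w z"
  define v where "v = w (Suc d)"
  define Z where "Z = Zset b m v"
  define Q where "Q = (\<Prod>j\<in>{1..d}. 1 + \<gamma> j * (3 + 2 * ln (real N)))"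
  define mean where "mean k = (\<Sum>z'\<in>Z. trunc_kernel N k (int (b^v * z'))) / of_nat (card Z)" for k
  define E where "E = of_real (\<gamma> (Suc d)) / of_nat N * (\<Sum>k<N. kernel_prod N \<gamma> d k y * mean k)"
  define B where "B = real m * (2 * (1 + ln (real N))) * real b * real (b^v)"
  have N1: "N \<ge> 1"
    unfolding N_def using prime_gt_0_nat[OF b] by simp
  have Z0: "card Z > 0"
    unfolding Z_def using card_Zset_pos[OF b] .
  \<comment> \<open>the minimiser is no worse than the mean over Z\<close>
  have "real (card Z) * R N \<gamma> (Suc d) y \<le> (\<Sum>z'\<in>Z. R N \<gamma> (Suc d) (genvec b w (z(Suc d := z'))))"
    using cbc d by (intro sum_bounded_below) (simp add: reduced_CBC_def Z_def N_def y_def v_def)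
  then have "R N \<gamma> (Suc d) y \<le> Re ((\<Sum>z'\<in>Z. Rc N \<gamma> (Suc d) (y(Suc d := int (b^v * z')))) / of_nat (card Z))"
    using Z0 by (simp add: R_def genvec_fun_upd pos_le_divide_eq mult.commute y_def v_def)
  also have "\<dots> = beta \<gamma> (Suc d) * R N \<gamma> d y + Re E"
    using N1 Z0 by (simp add: mean_Rc_Suc_fun_upd E_def mean_def R_def)
  finally have main: "R N \<gamma> (Suc d) y \<le> beta \<gamma> (Suc d) * R N \<gamma> d y + Re E" .
  have "norm (\<Sum>k<N. kernel_prod N \<gamma> d k y * mean k) \<le> (\<Sum>k<N. Q * norm (mean k))"
    using norm_kernel_prod_le[OF N1 \<gamma>] unfolding Q_def
    by (intro order_trans[OF norm_sum sum_mono]) (simp add: norm_mult mult_right_mono)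
  also have "\<dots> \<le> Q * B"
  proof -
    have "0 \<le> Q"
      unfolding Q_def using \<gamma> N1 by (intro prod_nonneg) simp
    then show ?thesis
      using sum_norm_mean_trunc_kernel_Zset_le[OF b m, of v]
      unfolding sum_distrib_left[symmetric] mean_def Z_def N_def B_def
      by (intro mult_left_mono)
  qed
  finally have "norm E \<le> \<gamma> (Suc d) / real N * (Q * B)"
    using \<gamma>[of "Suc d"] by (simp add: E_def norm_mult norm_divide mult_left_mono divide_right_mono)
  with main complex_Re_le_cmod[of E] show ?thesis
    unfolding N_def y_def Q_def v_def B_def by (simp add: field_simps)
qed

lemma product_bound_step:
  fixes R R' \<beta> g v A Q T G :: real
  assumes "R' \<le> \<beta> * R + g * v * Q * T" "R \<le> Q * T * G"
    and "0 \<le> \<beta>" "\<beta> \<le> 1 + g * A" "0 \<le> g" "0 \<le> v" "0 \<le> A" "0 \<le> Q" "0 \<le> T" "0 \<le> G"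
  shows "R' \<le> Q * (1 + g * A) * T * (G + g * v)"
proof -
  have "\<beta> * R \<le> \<beta> * (Q * T * G)"
    using assms(2,3) by (rule mult_left_mono)
  also have "\<dots> \<le> (1 + g * A) * (Q * T * G)"
    using assms(4,8-10) by (intro mult_right_mono) auto
  finally have "\<beta> * R \<le> (1 + g * A) * (Q * T * G)" .
  moreover have "g * v * Q * T \<le> (1 + g * A) * (g * v * Q * T)"
    using mult_right_mono[of 1 "1 + g * A" "g * v * Q * T"] assms(5-9) by simp
  ultimately show ?thesis
    using assms(1) by (simp add: algebra_simps)
qed

lemma R_le_of_reduced_CBC:
  assumes b: "prime b" and m: "m \<ge> 1" and \<gamma>: "\<And>j. j \<ge> 1 \<Longrightarrow> 0 \<le> \<gamma> j"
    and cbc: "reduced_CBC b m \<gamma> w s z" and d: "1 \<le> d" "d \<le> s"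
  shows "R (b^m) \<gamma> d (genvec b w z) \<le> (\<Prod>j\<in>{1..d}. 1 + \<gamma> j * (3 + 2 * ln (real (b^m))))
     * (real m * (2 * (1 + ln (real (b^m)))) * real b / real (b^m)) * (\<Sum>j\<in>{1..d}. \<gamma> j * real b ^ w j)"
proof -
  define N where "N = b^m"
  define A where "A = 3 + 2 * ln (real N)"
  define K where "K = 2 * (1 + ln (real N))"
  define T where "T = real m * K * real b / real N"
  define Q where "Q d = (\<Prod>j\<in>{1..d}. 1 + \<gamma> j * A)" for d
  define G where "G d = (\<Sum>j\<in>{1..d}. \<gamma> j * real b ^ w j)" for d
  have b2: "b \<ge> 2"
    using prime_ge_2_nat[OF b] .
  have N1: "N \<ge> 1"
    unfolding N_def using b2 by simp
  have A1: "A \<ge> 1" and K0: "K \<ge> 0"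
    unfolding A_def K_def using N1 by simp_all
  have KT: "K / real N \<le> T"
  proof -
    have "1 * 1 \<le> real m * real b"
      using m b2 by (intro mult_mono) auto
    then show ?thesis
      unfolding T_def using K0 N1 mult_right_mono[of 1 "real m * real b" K]
      by (simp add: divide_right_mono mult_ac)
  qed
  have T0: "T \<ge> 0"
    using KT K0 N1 by (meson divide_nonneg_nonneg of_nat_0_le_iff order_trans)
  have Q1: "Q d \<ge> 1" for d
    unfolding Q_def using \<gamma> A1 by (intro prod_ge_1) simp
  have G0: "G d \<ge> 0" for d
    unfolding G_def using \<gamma> by (intro sum_nonneg) simp
  have "d \<le> s \<Longrightarrow> R N \<gamma> d (genvec b w z) \<le> Q d * T * G d"
    using d(1)
  proof (induction d rule: nat_induct_at_least)
    case base
    have "R N \<gamma> 1 (genvec b w z) \<le> 1 * (K / real N) * G 1"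
      using R_one_le[of b \<gamma> z m w] b2 \<gamma>[of 1] cbc
      by (simp add: reduced_CBC_def N_def K_def G_def mult_ac)
    also have "\<dots> \<le> Q 1 * T * G 1"
      using Q1[of 1] KT K0 N1 G0[of 1] T0 by (intro mult_mono) auto
    finally show ?case .
  next
    case (Suc d)
    have "R N \<gamma> (Suc d) (genvec b w z) \<le> Q d * (1 + \<gamma> (Suc d) * A) * T * (G d + \<gamma> (Suc d) * real b ^ w (Suc d))"
    proof (rule product_bound_step)
      show "R N \<gamma> (Suc d) (genvec b w z) \<le> beta \<gamma> (Suc d) * R N \<gamma> d (genvec b w z)
          + \<gamma> (Suc d) * real b ^ w (Suc d) * Q d * T"
        using R_Suc_le_of_reduced_CBC[OF b m \<gamma> cbc] Suc
        unfolding N_def A_def K_def T_def Q_def by (simp add: mult_ac)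
      show "R N \<gamma> d (genvec b w z) \<le> Q d * T * G d"
        using Suc by simp
      show "beta \<gamma> (Suc d) \<le> 1 + \<gamma> (Suc d) * A"
        unfolding beta_def using \<gamma>[of "Suc d"] A1 by (simp add: mult_le_cancel_left1)
    qed (use \<gamma>[of "Suc d"] A1 Q1[of d] T0 G0[of d] in \<open>auto simp: beta_def\<close>)
    then show ?case
      unfolding Q_def G_def by (simp add: prod.nat_ivl_Suc' sum.nat_ivl_Suc')
  qed
  then show ?thesis
    using d(2) unfolding N_def A_def K_def T_def Q_def G_def .
qed

section \<open>Growth of the constants\<close>

lemma tail_sum_le:
  fixes \<gamma> :: "nat \<Rightarrow> real"
  assumes "summable (\<lambda>i. \<gamma> (i + 1))" "\<And>j. j \<ge> 1 \<Longrightarrow> 0 \<le> \<gamma> j" "r > 0"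
  obtains J where "\<And>s. (\<Sum>j\<in>{1..s} - {..J}. \<gamma> j) \<le> r"
proof -
  obtain J where J: "\<forall>n\<ge>J. norm (\<Sum>i. \<gamma> (i + n + 1)) < r"
    using suminf_exist_split[OF assms(3,1)] by (auto simp: add.assoc)
  have sJ: "summable (\<lambda>i. \<gamma> (i + J + 1))"
    using assms(1) summable_iff_shift[of "\<lambda>i. \<gamma> (i + 1)" J] by (simp add: add.commute add.left_commute)
  have "(\<Sum>j\<in>{1..s} - {..J}. \<gamma> j) \<le> r" for s
  proof -
    have "{1..s} - {..J} = (\<lambda>i. i + J + 1) ` {..<s - J}"
    proof (rule set_eqI, rule iffI)
      fix j assume "j \<in> {1..s} - {..J}"
      then have "j = (j - J - 1) + J + 1" "j - J - 1 < s - J"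
        by auto
      then show "j \<in> (\<lambda>i. i + J + 1) ` {..<s - J}"
        by (intro image_eqI) auto
    qed auto
    then have "(\<Sum>j\<in>{1..s} - {..J}. \<gamma> j) = (\<Sum>i<s - J. \<gamma> (i + J + 1))"
      by (simp add: sum.reindex inj_on_def)
    also have "\<dots> \<le> (\<Sum>i. \<gamma> (i + J + 1))"
      using assms(2) by (intro sum_le_suminf[OF sJ]) auto
    also have "\<dots> \<le> r"
      using J by auto
    finally show ?thesis .
  qed
  then show ?thesis
    using that by blast
qed

lemma prod_one_plus_mult_le:
  fixes \<gamma> :: "nat \<Rightarrow> real"
  assumes \<gamma>: "\<And>j. j \<ge> 1 \<Longrightarrow> 0 \<le> \<gamma> j \<and> \<gamma> j \<le> 1" and A: "A \<ge> 0"
    and tail: "(\<Sum>j\<in>{1..s} - {..J}. \<gamma> j) \<le> r"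
  shows "(\<Prod>j\<in>{1..s}. 1 + \<gamma> j * A) \<le> (1 + A) ^ J * exp (A * r)"
proof -
  have "(\<Prod>j\<in>{1..s}. 1 + \<gamma> j * A) \<le> (\<Prod>j\<in>{1..s}. if j \<le> J then 1 + A else exp (\<gamma> j * A))"
  proof (rule prod_mono, safe)
    fix j assume "j \<in> {1..s}"
    then have "0 \<le> \<gamma> j" "\<gamma> j \<le> 1"
      using \<gamma> by auto
    then show "0 \<le> 1 + \<gamma> j * A" "1 + \<gamma> j * A \<le> (if j \<le> J then 1 + A else exp (\<gamma> j * A))"
      using A exp_ge_add_one_self[of "\<gamma> j * A"] by (auto simp: mult_left_le_one_le add.commute)
  qed
  also have "\<dots> = (1 + A) ^ card ({1..s} \<inter> {..J}) * exp (A * (\<Sum>j\<in>{1..s} - {..J}. \<gamma> j))"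
    by (simp add: prod.If_cases exp_sum sum_distrib_left mult.commute Diff_eq atMost_def)
  also have "\<dots> \<le> (1 + A) ^ J * exp (A * r)"
  proof (intro mult_mono)
    have "card ({1..s} \<inter> {..J}) \<le> card {1..J}"
      by (rule card_mono) auto
    then show "(1 + A) ^ card ({1..s} \<inter> {..J}) \<le> (1 + A) ^ J"
      using A by (intro power_increasing) auto
    show "exp (A * (\<Sum>j\<in>{1..s} - {..J}. \<gamma> j)) \<le> exp (A * r)"
      using tail A by (simp add: mult_left_mono)
  qed (use A in auto)
  finally show ?thesis .
qed

lemma add_mult_ln_le_powr:
  fixes x a c \<epsilon> :: real
  assumes "x \<ge> 1" "\<epsilon> > 0" "a \<ge> 0" "c \<ge> 0"
  shows "a + c * ln x \<le> (a + c / \<epsilon>) * x powr \<epsilon>"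
proof -
  have "c * ln x \<le> c * (x powr \<epsilon> / \<epsilon>)"
    using ln_powr_bound[OF assms(1,2)] assms(4) by (rule mult_left_mono)
  moreover have "a \<le> a * x powr \<epsilon>"
    using assms by (simp add: mult_le_cancel_left1 ge_one_powr_ge_zero)
  ultimately show ?thesis
    by (simp add: algebra_simps)
qed

lemma prod_one_plus_weight_log_le_powr:
  fixes \<gamma> :: "nat \<Rightarrow> real"
  assumes "summable (\<lambda>i. \<gamma> (i + 1))" and \<gamma>: "\<And>j. j \<ge> 1 \<Longrightarrow> 0 \<le> \<gamma> j \<and> \<gamma> j \<le> 1" and "\<epsilon> > 0"
  obtains C where "C > 0" "\<And>s x. x \<ge> 1 \<Longrightarrow> (\<Prod>j\<in>{1..s}. 1 + \<gamma> j * (3 + 2 * ln x)) \<le> C * x powr \<epsilon>"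
proof -
  obtain J where J: "\<And>s. (\<Sum>j\<in>{1..s} - {..J}. \<gamma> j) \<le> \<epsilon> / 4"
    using tail_sum_le[OF assms(1), of "\<epsilon> / 4"] \<gamma> \<open>\<epsilon> > 0\<close> by auto
  define \<eta> where "\<eta> = \<epsilon> / (2 * (real J + 1))"
  have \<eta>: "\<eta> > 0" "real J * \<eta> \<le> \<epsilon> / 2"
    unfolding \<eta>_def using \<open>\<epsilon> > 0\<close> by (auto simp: field_simps)
  define C where "C = (4 + 2 / \<eta>) ^ J * exp (3 * \<epsilon> / 4)"
  show thesis
  proof (rule that)
    show "C > 0"
      unfolding C_def using \<eta> by (simp add: add_pos_pos)
    fix s and x :: real
    assume x: "x \<ge> 1"
    define A where "A = 3 + 2 * ln x"
    have A0: "A \<ge> 0"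
      unfolding A_def using x by simp
    have "(1 + A) ^ J \<le> ((4 + 2 / \<eta>) * x powr \<eta>) ^ J"
      using add_mult_ln_le_powr[OF x \<eta>(1), of 4 2] A0 unfolding A_def by (intro power_mono) auto
    also have "\<dots> = (4 + 2 / \<eta>) ^ J * x powr (real J * \<eta>)"
      using x by (simp add: power_mult_distrib powr_power mult.commute)
    also have "\<dots> \<le> (4 + 2 / \<eta>) ^ J * x powr (\<epsilon> / 2)"
      using x \<eta> by (intro mult_left_mono powr_mono) (auto simp: add_pos_pos less_imp_le)
    finally have power_le: "(1 + A) ^ J \<le> (4 + 2 / \<eta>) ^ J * x powr (\<epsilon> / 2)" .
    have exp_eq: "exp (A * (\<epsilon> / 4)) = exp (3 * \<epsilon> / 4) * x powr (\<epsilon> / 2)"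
      using x by (simp add: A_def powr_def algebra_simps flip: exp_add)
    have "(\<Prod>j\<in>{1..s}. 1 + \<gamma> j * A) \<le> (1 + A) ^ J * exp (A * (\<epsilon> / 4))"
      by (rule prod_one_plus_mult_le[OF \<gamma> A0 J])
    also have "\<dots> \<le> (4 + 2 / \<eta>) ^ J * x powr (\<epsilon> / 2) * exp (A * (\<epsilon> / 4))"
      using power_le by (rule mult_right_mono) simp
    also have "\<dots> = C * x powr \<epsilon>"
      unfolding exp_eq C_def using x by (simp add: mult_ac flip: powr_add)
    finally show "(\<Prod>j\<in>{1..s}. 1 + \<gamma> j * (3 + 2 * ln x)) \<le> C * x powr \<epsilon>"
      unfolding A_def .
  qed
qed

lemma mult_log_power_le_powr:
  fixes b :: nat
  assumes "b \<ge> 2" "\<epsilon> > 0"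
  obtains C where "C > 0" "\<And>m. real m * (2 * (1 + ln (real (b ^ m)))) \<le> C * real (b ^ m) powr \<epsilon>"
proof -
  define C where "C = 3 / \<epsilon> * (2 * (1 + 2 / \<epsilon>))"
  show thesis
  proof (rule that)
    show "C > 0"
      unfolding C_def using assms(2) by (simp add: add_pos_pos)
    fix m
    define x where "x = real (b ^ m)"
    define u where "u = x powr (\<epsilon> / 2)"
    have x: "x \<ge> 1"
      unfolding x_def using assms(1) by simp
    have "ln 2 \<le> ln (real b)"
      using assms(1) by simp
    then have "real m * (2 / 3) \<le> real m * ln (real b)"
      using ln2_ge_two_thirds by (intro mult_left_mono) auto
    also have "\<dots> = ln x"
      unfolding x_def using assms(1) by (simp add: ln_realpow)
    finally have "real m \<le> 3 / 2 * ln x"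
      by simp
    also have "\<dots> \<le> 3 / 2 * (u / (\<epsilon> / 2))"
      unfolding u_def using ln_powr_bound[OF x, of "\<epsilon> / 2"] assms(2) by simp
    finally have m_le: "real m \<le> 3 / \<epsilon> * u"
      by simp
    have K_le: "2 * (1 + ln x) \<le> 2 * (1 + 2 / \<epsilon>) * u"
      using add_mult_ln_le_powr[OF x, of "\<epsilon> / 2" 1 1] assms(2) unfolding u_def by (simp add: algebra_simps)
    have "real m * (2 * (1 + ln x)) \<le> 3 / \<epsilon> * u * (2 * (1 + 2 / \<epsilon>) * u)"
      using x assms(2) by (intro mult_mono[OF m_le K_le]) (auto simp: u_def)
    also have "\<dots> = C * (u * u)"
      unfolding C_def by (simp add: mult_ac)
    also have "u * u = x powr \<epsilon>"
      unfolding u_def by (simp flip: powr_add)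
    finally show "real m * (2 * (1 + ln (real (b ^ m)))) \<le> C * real (b ^ m) powr \<epsilon>"
      unfolding x_def .
  qed
qed

lemma sum_atLeast1_le_suminf_shift:
  fixes f :: "nat \<Rightarrow> real"
  assumes "summable (\<lambda>j. f (j + 1))" "\<And>j. j \<ge> 1 \<Longrightarrow> 0 \<le> f j"
  shows "(\<Sum>j\<in>{1..s}. f j) \<le> (\<Sum>j. f (j + 1))"
proof -
  have "(\<Sum>j\<in>{1..s}. f j) = (\<Sum>j<s. f (j + 1))"
    by (simp add: sum.atLeast1_atMost_eq)
  also have "\<dots> \<le> (\<Sum>j. f (j + 1))"
    using assms by (intro sum_le_suminf) auto
  finally show ?thesis .
qed

lemma summable_of_summable_weighted:
  fixes \<gamma> :: "nat \<Rightarrow> real"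
  assumes "summable (\<lambda>j. \<gamma> (j + 1) * real b ^ w (j + 1))" "b \<ge> 1" "\<And>j. 0 \<le> \<gamma> (j + 1)"
  shows "summable (\<lambda>j. \<gamma> (j + 1))"
proof (rule summable_comparison_test'[OF assms(1)])
  fix j :: nat
  have "1 \<le> real b ^ w (j + 1)"
    using assms(2) by simp
  then show "norm (\<gamma> (j + 1)) \<le> \<gamma> (j + 1) * real b ^ w (j + 1)"
    using assms(3)[of j] by (simp add: mult_le_cancel_left1)
qed

lemma R_reduced_CBC_le_powr:
  fixes \<gamma> :: "nat \<Rightarrow> real"
  assumes b: "prime b" and \<gamma>: "\<And>j. j \<ge> 1 \<Longrightarrow> 0 \<le> \<gamma> j \<and> \<gamma> j \<le> 1"
    and summable: "summable (\<lambda>j. \<gamma> (j + 1) * real b ^ w (j + 1))" and "\<epsilon> > 0"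
  obtains c where "c > 0" "\<And>s m z. 1 \<le> s \<Longrightarrow> 1 \<le> m \<Longrightarrow> reduced_CBC b m \<gamma> w s z \<Longrightarrow>
      R (b ^ m) \<gamma> s (genvec b w z) \<le> c * real (b ^ m) powr (\<epsilon> - 1)"
proof -
  have b2: "b \<ge> 2"
    using prime_ge_2_nat[OF b] .
  have "summable (\<lambda>j. \<gamma> (j + 1))"
    using b2 \<gamma> by (intro summable_of_summable_weighted[OF summable]) auto
  then obtain C1 where C1: "C1 > 0" "\<And>s x. x \<ge> 1 \<Longrightarrow> (\<Prod>j\<in>{1..s}. 1 + \<gamma> j * (3 + 2 * ln x)) \<le> C1 * x powr (\<epsilon> / 2)"
    using prod_one_plus_weight_log_le_powr[of \<gamma> "\<epsilon> / 2"] \<gamma> \<open>\<epsilon> > 0\<close> by auto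
  obtain C2 where C2: "C2 > 0" "\<And>m. real m * (2 * (1 + ln (real (b ^ m)))) \<le> C2 * real (b ^ m) powr (\<epsilon> / 2)"
    using mult_log_power_le_powr[OF b2, of "\<epsilon> / 2"] \<open>\<epsilon> > 0\<close> by auto
  define G where "G = (\<Sum>j. \<gamma> (j + 1) * real b ^ w (j + 1))"
  have G: "G \<ge> 0"
    unfolding G_def using summable \<gamma> by (intro suminf_nonneg) auto
  show thesis
  proof (rule that)
    show "C1 * C2 * real b * (G + 1) > 0"
      using C1 C2 G b2 by simp
    fix s m z
    assume "1 \<le> s" "1 \<le> m" "reduced_CBC b m \<gamma> w s z"
    define N where "N = real (b ^ m)"
    have N1: "N \<ge> 1"
      unfolding N_def using b2 by simp
    have "R (b ^ m) \<gamma> s (genvec b w z) \<le> (\<Prod>j\<in>{1..s}. 1 + \<gamma> j * (3 + 2 * ln N))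
        * (real m * (2 * (1 + ln N)) * real b / N) * (\<Sum>j\<in>{1..s}. \<gamma> j * real b ^ w j)"
      using R_le_of_reduced_CBC[OF b \<open>1 \<le> m\<close> _ \<open>reduced_CBC b m \<gamma> w s z\<close> \<open>1 \<le> s\<close> order_refl] \<gamma>
      unfolding N_def by simp
    also have "\<dots> \<le> (C1 * N powr (\<epsilon> / 2)) * (C2 * N powr (\<epsilon> / 2) * real b / N) * (G + 1)"
    proof (intro mult_mono)
      show "(\<Prod>j\<in>{1..s}. 1 + \<gamma> j * (3 + 2 * ln N)) \<le> C1 * N powr (\<epsilon> / 2)"
        using C1(2)[OF N1] .
      show "real m * (2 * (1 + ln N)) * real b / N \<le> C2 * N powr (\<epsilon> / 2) * real b / N"
        using C2(2)[of m] N1 unfolding N_def by (intro divide_right_mono mult_right_mono) auto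
      have "(\<Sum>j\<in>{1..s}. \<gamma> j * real b ^ w j) \<le> G"
        unfolding G_def by (rule sum_atLeast1_le_suminf_shift[OF summable]) (use \<gamma> in simp)
      then show "(\<Sum>j\<in>{1..s}. \<gamma> j * real b ^ w j) \<le> G + 1"
        by simp
    qed (use C1 C2 N1 \<gamma> in \<open>auto intro!: sum_nonneg\<close>)
    also have "\<dots> = C1 * C2 * real b * (G + 1) * N powr (\<epsilon> - 1)"
      using N1 by (simp add: powr_diff field_simps flip: powr_add)
    finally show "R (b ^ m) \<gamma> s (genvec b w z) \<le> C1 * C2 * real b * (G + 1) * real (b ^ m) powr (\<epsilon> - 1)"
      unfolding N_def .
  qed
qed

theorem mainTheorem5:
  fixes b :: nat and \<gamma> :: "nat \<Rightarrow> real" and w :: "nat \<Rightarrow> nat"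
  assumes "prime b"
    and "\<forall>j\<ge>1. \<gamma> (j + 1) \<le> \<gamma> j"
    and "\<forall>j\<ge>1. 0 < \<gamma> j \<and> \<gamma> j \<le> 1"
    and "\<forall>j\<ge>1. w j \<le> w (j + 1)"
    and "summable (\<lambda>j. \<gamma> (j + 1) * real b ^ w (j + 1))"
  shows "\<forall>\<delta>::real. 0 < \<delta> \<and> \<delta> < 1 \<longrightarrow>
           (\<exists>c>0. \<forall>s\<ge>1. \<forall>m\<ge>1. \<forall>z. reduced_CBC b m \<gamma> w s z \<longrightarrow>
              R (b ^ m) \<gamma> s (genvec b w z) \<le> c * real (b ^ m) powr (\<delta> - 1))"
proof (intro allI impI)
  fix \<delta> :: real
  assume "0 < \<delta> \<and> \<delta> < 1"
  then have "\<delta> > 0"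
    by simp
  have \<gamma>: "\<And>j. j \<ge> 1 \<Longrightarrow> 0 \<le> \<gamma> j \<and> \<gamma> j \<le> 1"
    using assms(3) by (simp add: less_imp_le)
  obtain c where "c > 0" "\<And>s m z. 1 \<le> s \<Longrightarrow> 1 \<le> m \<Longrightarrow> reduced_CBC b m \<gamma> w s z \<Longrightarrow>
      R (b ^ m) \<gamma> s (genvec b w z) \<le> c * real (b ^ m) powr (\<delta> - 1)"
    using R_reduced_CBC_le_powr[OF assms(1) \<gamma> assms(5) \<open>\<delta> > 0\<close>] by blast
  then show "\<exists>c>0. \<forall>s\<ge>1. \<forall>m\<ge>1. \<forall>z. reduced_CBC b m \<gamma> w s z \<longrightarrow>
      R (b ^ m) \<gamma> s (genvec b w z) \<le> c * real (b ^ m) powr (\<delta> - 1)"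
    by blast
qed

end
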